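(* Let $\underline{\xi}=(\xi_i)_{i\ge 0}$ be a sequence of real numbers with $\xi_0=1$. Let $(r_n)_{n\ge 0}$ be a non-decreasing sequence of positive integers, and let $(Q_n)_{n\ge 0}$, $(A_n)_{n\ge 0}$, $(B_n)_{n\ge 0}$ be sequences of positive real numbers such that $\lim_{n\to\infty} A_n^{1/r_n}=\infty$ and $Q_nB_n\le Q_{n+1}B_{n+1}$ for all sufficiently large integers $n$. For each integer $n\ge 0$ let $$L_n(\underline{X})=\ell_{0n}X_0+\ell_{1n}X_1+\cdots+\ell_{r_n n}X_{r_n}$$ be a linear form with integer coefficients $\ell_{in}\in\mathbb{Z}$ in $r_n+1$ variables, and write $L_n(\underline{\xi})=\sum_{i=0}^{r_n}\ell_{in}\xi_i$. Assume that for all sufficiently large integers $n$, $$\sum_{i=0}^{r_n}|\ell_{in}|\le Q_n,\qquad 0<|L_n(\underline{\xi})|\le \frac{1}{A_n},\qquad \frac{|L_{n-1}(\underline{\xi})|}{|L_n(\underline{\xi})|}\le B_n.$$ Then $A_n\le 2^{r_n+1}(B_nQ_n)^{r_n}$ for all sufficiently large integers $n$. *)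

theory Defs
  imports Complex_Main
begin

definition linform :: "(nat \<Rightarrow> nat \<Rightarrow> int) \<Rightarrow> (nat \<Rightarrow> nat) \<Rightarrow> (nat \<Rightarrow> real) \<Rightarrow> nat \<Rightarrow> real" where
  "linform l r xi n = (\<Sum>i=0..r n. real_of_int (l i n) * xi i)"

end

theory Submission
  imports Defs "HOL-Library.FuncSet"
begin

(* Fix N beyond which all hypotheses hold and suppose A_n > 2^(r_n+1) (B_n Q_n)^(r_n) for
   some large n.  A real-parameter form of Dirichlet's simultaneous approximation theorem gives an
   integer 1 <= q <= A_n/2 with |q xi_i - p_i| < delta for 1 <= i <= r_n, where delta is roughly
   min(1/(2 B_n Q_n), A_n^(-1/r_n)).  Replacing xi by the integer point (q, p_1, ..., p_r) turns
   q L_k(xi) into an integer Lambda_k up to an error delta Q_k.  Starting from |q L_n| <= 1/2, a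
   dichotomy (Lambda_k = 0, or Lambda_k <> 0 which forces B_k <= 1) shows |q L_k| <= 1/2 for all k
   down to N; at k = N this contradicts delta being small compared with |L_N| and 1/Q_N. *)

(* Pigeonhole on the discrete torus (Z/M)^I: attach to each of the K+1 base points q <= K all
   D^|I| integer shifts t; if (K+1) D^|I| > M^|I|, two distinct shifted points fall into the same
   cell of the torus. *)
lemma torus_pigeonhole:
  fixes g :: "nat \<Rightarrow> 'i \<Rightarrow> int" and I :: "'i set" and K M D :: nat
  assumes I: "finite I" and M: "0 < M" and count: "M ^ card I < (K + 1) * D ^ card I"
  obtains q' q t t' where "q' \<le> q" "q \<le> K" "t \<in> I \<rightarrow>\<^sub>E {..<D}" "t' \<in> I \<rightarrow>\<^sub>E {..<D}"
    "(q, t) \<noteq> (q', t')"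
    "\<And>i. i \<in> I \<Longrightarrow> (g q i + int (t i)) mod int M = (g q' i + int (t' i)) mod int M"
proof -
  define S where "S = {..K} \<times> (I \<rightarrow>\<^sub>E {..<D})"
  define T where "T = I \<rightarrow>\<^sub>E {..<M}"
  define cell where "cell = (\<lambda>(q, t). \<lambda>i\<in>I. nat ((g q i + int (t i)) mod int M))"
  have "cell ` S \<subseteq> T"
    using M by (auto simp: S_def T_def cell_def nat_less_iff)
  moreover have "card T < card S"
    using count I by (simp add: S_def T_def card_cartesian_product card_PiE)
  ultimately have "\<not> inj_on cell S"
    using card_inj_on_le[of cell S T] I by (auto simp: T_def finite_PiE)
  then obtain a s b u where in_S: "(a, s) \<in> S" "(b, u) \<in> S"
    and neq: "(a, s) \<noteq> (b, u)" and eq: "cell (a, s) = cell (b, u)"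
    unfolding inj_on_def by auto
  have same_cell: "(g a i + int (s i)) mod int M = (g b i + int (u i)) mod int M" if "i \<in> I" for i
    using fun_cong[OF eq, of i] that M by (simp add: cell_def eq_nat_nat_iff)
  show thesis
  proof (cases "b \<le> a")
    case True
    with in_S neq same_cell show thesis by (intro that[of b a s u]) (auto simp: S_def)
  next
    case False
    with in_S neq same_cell show thesis by (intro that[of a b u s]) (auto simp: S_def)
  qed
qed

(* Consequence: two distinct base points q' < q whose scaled values are within distance < D of each
   other modulo M in every coordinate (a box shift cannot collide with itself since D <= M). *)
lemma torus_box_collision:
  fixes g :: "nat \<Rightarrow> 'i \<Rightarrow> int" and I :: "'i set" and K M D :: nat
  assumes I: "finite I" and M: "0 < M" and DM: "D \<le> M"
    and count: "M ^ card I < (K + 1) * D ^ card I"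
  obtains q' q m where "q' < q" "q \<le> K"
    "\<And>i. i \<in> I \<Longrightarrow> \<bar>g q i - g q' i - int M * m i\<bar> < int D"
proof -
  obtain q' q t t' where qq: "q' \<le> q" "q \<le> K"
    and t: "t \<in> I \<rightarrow>\<^sub>E {..<D}" "t' \<in> I \<rightarrow>\<^sub>E {..<D}"
    and neq: "(q, t) \<noteq> (q', t')"
    and cell: "\<And>i. i \<in> I \<Longrightarrow> (g q i + int (t i)) mod int M = (g q' i + int (t' i)) mod int M"
    using torus_pigeonhole[where g = g, OF I M count] by blast
  have "\<exists>m. g q i - g q' i - int M * m = int (t' i) - int (t i)" if "i \<in> I" for i
  proof -
    have "int M dvd (g q i + int (t i)) - (g q' i + int (t' i))"
      using cell[OF that] by (simp add: mod_eq_dvd_iff)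
    then obtain m where "(g q i + int (t i)) - (g q' i + int (t' i)) = int M * m" ..
    then show ?thesis by (intro exI[of _ m]) linarith
  qed
  then have "\<forall>i\<in>I. \<exists>m. g q i - g q' i - int M * m = int (t' i) - int (t i)" by blast
  from bchoice[OF this] obtain m
    where m: "\<forall>i\<in>I. g q i - g q' i - int M * m i = int (t' i) - int (t i)" ..
  have small: "\<bar>int (t' i) - int (t i)\<bar> < int D" if "i \<in> I" for i
  proof -
    have "t i < D" "t' i < D" using t that by auto
    then show ?thesis by linarith
  qed
  text \<open>Equal first components would force equal shifts, since shifts differ by less than \<open>M\<close>.\<close>
  have "q \<noteq> q'"
  proof
    assume "q = q'"
    have "t i = t' i" if i: "i \<in> I" for i
    proof (rule ccontr)
      assume "t i \<noteq> t' i"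
      have "int (t' i) - int (t i) = int M * (- m i)"
        using m i \<open>q = q'\<close> by simp
      then have "int M dvd int (t' i) - int (t i)" ..
      then have "int M \<le> \<bar>int (t' i) - int (t i)\<bar>"
        using \<open>t i \<noteq> t' i\<close> dvd_imp_le_int[of "int (t' i) - int (t i)" "int M"] by simp
      then show False using small[OF i] DM by linarith
    qed
    then have "t = t'" using t by (auto intro: PiE_ext)
    then show False using neq \<open>q = q'\<close> by simp
  qed
  show thesis
  proof (rule that[of q' q m])
    show "q' < q" using qq(1) \<open>q \<noteq> q'\<close> by simp
    show "q \<le> K" by (rule qq(2))
    show "\<bar>g q i - g q' i - int M * m i\<bar> < int D" if "i \<in> I" for i
      using m small[OF that] that by simp
  qed
qed

(* A real box of side delta (with (K+1) delta^R > 1) can be replaced by a grid box of D cells out of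
   M per side that still satisfies the integer counting condition of the torus pigeonhole. *)
lemma grid_for_box:
  fixes \<delta> :: real and K R :: nat
  assumes d0: "0 < \<delta>" and d1: "\<delta> \<le> 1" and big: "1 < real (K + 1) * \<delta> ^ R"
  obtains M D :: nat where "0 < M" "D \<le> M" "real D \<le> \<delta> * real M"
    "M ^ R < (K + 1) * D ^ R"
proof -
  have lim: "(\<lambda>M. real (K + 1) * (\<delta> - 1 / real M) ^ R) \<longlonglongrightarrow> real (K + 1) * (\<delta> - 0) ^ R"
    by (intro tendsto_intros)
  have "eventually (\<lambda>M. 1 < real (K + 1) * (\<delta> - 1 / real M) ^ R) sequentially"
    using order_tendstoD(1)[OF lim] big by simp
  moreover have "eventually (\<lambda>M. 1 / real M < \<delta>) sequentially"
    using order_tendstoD(2)[OF lim_1_over_n d0] .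
  moreover have "eventually (\<lambda>M::nat. 0 < M) sequentially"
    by (rule eventually_gt_at_top)
  ultimately have "eventually (\<lambda>M. 0 < M \<and> 1 < real (K + 1) * (\<delta> - 1 / real M) ^ R
      \<and> 1 / real M < \<delta>) sequentially"
    by eventually_elim blast
  then obtain M :: nat where M0: "0 < M" and M1: "1 < real (K + 1) * (\<delta> - 1 / real M) ^ R"
    and M2: "1 / real M < \<delta>"
    using eventually_happens'[OF sequentially_bot] by blast
  define D where "D = nat \<lfloor>\<delta> * real M\<rfloor>"
  have "real D = of_int \<lfloor>\<delta> * real M\<rfloor>"
    using d0 unfolding D_def by simp
  then have D_le: "real D \<le> \<delta> * real M" and D_ge: "\<delta> * real M - 1 \<le> real D"
    using floor_correct[of "\<delta> * real M"] by linarith+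
  have "\<delta> * real M \<le> 1 * real M"
    using d1 by (intro mult_right_mono) auto
  then have "D \<le> M" using D_le by simp
  have eq: "real M * (\<delta> - 1 / real M) = \<delta> * real M - 1"
    using M0 by (simp add: field_simps)
  have "1 < \<delta> * real M"
    using M0 M2 by (simp add: field_simps)
  then have step: "0 \<le> real M * (\<delta> - 1 / real M)" "real M * (\<delta> - 1 / real M) \<le> real D"
    unfolding eq using D_ge by linarith+
  have "real M ^ R = real M ^ R * 1" by simp
  also have "\<dots> < real M ^ R * (real (K + 1) * (\<delta> - 1 / real M) ^ R)"
    using M0 M1 by (intro mult_strict_left_mono) auto
  also have "\<dots> = real (K + 1) * (real M * (\<delta> - 1 / real M)) ^ R"
    by (simp add: power_mult_distrib)
  also have "\<dots> \<le> real (K + 1) * real D ^ R"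
    using step by (intro mult_left_mono power_mono) auto
  finally have "real (M ^ R) < real ((K + 1) * D ^ R)" by (simp only: of_nat_mult of_nat_power)
  then have "M ^ R < (K + 1) * D ^ R" by (simp only: of_nat_less_iff)
  then show thesis by (rule that[OF M0 \<open>D \<le> M\<close> D_le])
qed

(* Dirichlet's simultaneous approximation theorem with real parameters: if X delta^|I| > 1 then some
   integer 1 <= q <= X approximates all q theta_i to within delta by integers.  (The library version
   Dirichlet_approx_simult only allows delta = 1/N and X = N^n, which is too coarse here.) *)
theorem dirichlet_simultaneous_real:
  fixes \<theta> :: "'i \<Rightarrow> real" and I :: "'i set" and X \<delta> :: real
  assumes I: "finite I" and d0: "0 < \<delta>" and d1: "\<delta> \<le> 1"
    and big: "1 < X * \<delta> ^ card I"
  obtains q :: int and p :: "'i \<Rightarrow> int"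
  where "1 \<le> q" "real_of_int q \<le> X" "\<And>i. i \<in> I \<Longrightarrow> \<bar>of_int q * \<theta> i - of_int (p i)\<bar> < \<delta>"
proof -
  define K where "K = nat \<lfloor>X\<rfloor>"
  have "0 < X * \<delta> ^ card I" "0 < \<delta> ^ card I" using big d0 by simp_all
  then have "0 < X" using d0 by (auto simp: zero_less_mult_iff)
  then have K_le: "real K \<le> X" and K_gt: "X < real K + 1"
    unfolding K_def by linarith+
  have "X * \<delta> ^ card I \<le> real (K + 1) * \<delta> ^ card I"
    using K_gt d0 by (intro mult_right_mono) auto
  then have "1 < real (K + 1) * \<delta> ^ card I" using big by linarith
  then obtain M D :: nat where M0: "0 < M" and DM: "D \<le> M" and D_le: "real D \<le> \<delta> * real M"
    and count: "M ^ card I < (K + 1) * D ^ card I"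
    by (rule grid_for_box[OF d0 d1])
  text \<open>Rounded scaled multiples of the point \<open>\<theta>\<close>; two of them nearly agree modulo \<open>M\<close>.\<close>
  define g where "g = (\<lambda>q i. \<lceil>real M * (real q * \<theta> i)\<rceil>)"
  obtain b a m where ab: "b < a" "a \<le> K"
    and close: "\<And>i. i \<in> I \<Longrightarrow> \<bar>g a i - g b i - int M * m i\<bar> < int D"
    using torus_box_collision[where g = g, OF I M0 DM count] by blast
  define q where "q = int a - int b"
  have approx: "\<bar>of_int q * \<theta> i - of_int (m i)\<bar> < \<delta>" if i: "i \<in> I" for i
  proof -
    define z where "z = g a i - g b i - int M * m i"
    define w where "w = of_int q * \<theta> i - of_int (m i)"
    have "\<bar>z\<bar> \<le> int D - 1" using close[OF i] unfolding z_def by linarith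
    then have "real_of_int \<bar>z\<bar> \<le> real_of_int (int D - 1)" by (simp only: of_int_le_iff)
    then have z_le: "\<bar>real_of_int z\<bar> \<le> real D - 1" by simp
    have "real M * w - real_of_int z
        = (real M * (real a * \<theta> i) - g a i) - (real M * (real b * \<theta> i) - g b i)"
      unfolding z_def w_def q_def by (simp add: algebra_simps)
    then have "\<bar>real M * w - real_of_int z\<bar> < 1"
      unfolding g_def abs_less_iff
      using ceiling_correct[of "real M * (real a * \<theta> i)"] ceiling_correct[of "real M * (real b * \<theta> i)"]
      by linarith
    with z_le have "\<bar>real M * w\<bar> < real D"
      unfolding abs_less_iff abs_le_iff by linarith
    with D_le have "real M * \<bar>w\<bar> < real M * \<delta>" by (simp add: abs_mult mult.commute)
    then show ?thesis unfolding w_def using M0 by simp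
  qed
  show thesis
  proof (rule that[of q m])
    show "1 \<le> q" using ab unfolding q_def by simp
    show "real_of_int q \<le> X" using ab K_le unfolding q_def by simp
  qed (rule approx)
qed

lemma approx_linear_combination:
  fixes c :: "'i \<Rightarrow> int" and x :: "'i \<Rightarrow> real" and v :: "'i \<Rightarrow> int" and q \<delta> :: real
  assumes "\<And>i. i \<in> S \<Longrightarrow> \<bar>q * x i - of_int (v i)\<bar> \<le> \<delta>"
  shows "\<bar>q * (\<Sum>i\<in>S. of_int (c i) * x i) - of_int (\<Sum>i\<in>S. c i * v i)\<bar>
           \<le> \<delta> * (\<Sum>i\<in>S. \<bar>real_of_int (c i)\<bar>)"
proof -
  have "q * (\<Sum>i\<in>S. of_int (c i) * x i) - of_int (\<Sum>i\<in>S. c i * v i)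
      = (\<Sum>i\<in>S. of_int (c i) * (q * x i - of_int (v i)))"
    by (simp add: sum_distrib_left sum_subtractf algebra_simps)
  also have "\<bar>\<dots>\<bar> \<le> (\<Sum>i\<in>S. \<bar>of_int (c i)\<bar> * \<delta>)"
    using assms by (intro order_trans[OF sum_abs] sum_mono) (auto simp: abs_mult intro: mult_left_mono)
  finally show ?thesis by (simp add: sum_distrib_left mult.commute)
qed

(* One descent step: if u is close to an integer, |u| <= 1/2 and |u'| <= B |u|, then |u'| <= 1/2.
   Either the integer is 0 and |u'| <= B delta Q <= delta P, or it is not, which forces Q >= P and
   hence B <= 1. *)
lemma small_value_propagates:
  fixes u u' \<delta> Q B P :: real and \<Lambda> :: int
  assumes ratio: "\<bar>u'\<bar> \<le> B * \<bar>u\<bar>" and approx: "\<bar>u - of_int \<Lambda>\<bar> \<le> \<delta> * Q"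
    and u_small: "\<bar>u\<bar> \<le> 1 / 2" and QB: "Q * B \<le> P" and dP: "\<delta> * P \<le> 1 / 2"
    and Q0: "0 < Q" and B0: "0 < B"
  shows "\<bar>u'\<bar> \<le> 1 / 2"
proof (cases "\<Lambda> = 0")
  case True
  then have u_le: "\<bar>u\<bar> \<le> \<delta> * Q" using approx by simp
  then have "0 \<le> \<delta> * Q" by (meson abs_ge_zero order_trans)
  then have "0 \<le> \<delta>" using Q0 by (simp add: zero_le_mult_iff)
  have "\<bar>u'\<bar> \<le> B * (\<delta> * Q)" using ratio u_le B0 by (meson mult_left_mono less_imp_le order_trans)
  also have "\<dots> = \<delta> * (Q * B)" by simp
  also have "\<dots> \<le> \<delta> * P" using QB \<open>0 \<le> \<delta>\<close> by (rule mult_left_mono)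
  finally show ?thesis using dP by linarith
next
  case False
  then have "1 \<le> \<bar>real_of_int \<Lambda>\<bar>" by linarith
  then have "1 / 2 \<le> \<delta> * Q" using approx u_small by linarith
  then have "0 < \<delta> * Q" by linarith
  then have "0 < \<delta>" using Q0 by (simp add: zero_less_mult_iff)
  have "\<delta> * P \<le> \<delta> * Q" using \<open>1 / 2 \<le> \<delta> * Q\<close> dP by linarith
  then have "Q * B \<le> Q * 1" using QB \<open>0 < \<delta>\<close> by simp
  then have "B \<le> 1" using Q0 by simp
  then have "B * \<bar>u\<bar> \<le> 1 * \<bar>u\<bar>" by (intro mult_right_mono) auto
  then show ?thesis using ratio u_small by linarith
qed

lemma choose_delta:
  fixes A P c :: real and R :: nat
  assumes P0: "0 < P" and c0: "0 < c" and R1: "1 \<le> R" and A0: "0 < A"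
    and A_big: "2 ^ (R + 1) * P ^ R < A" and root_big: "3 + 3 / c \<le> A powr (1 / real R)"
  obtains \<delta> :: real where "0 < \<delta>" "\<delta> \<le> 1" "\<delta> * P \<le> 1 / 2" "1 < A / 2 * \<delta> ^ R" "\<delta> < c"
proof -
  define a where "a = A powr (1 / real R)"
  have root: "3 + 3 / c \<le> a" using root_big unfolding a_def .
  have "0 < 3 / c" using c0 by simp
  then have a3: "3 \<le> a" and pos: "0 < 3 + 3 / c" using root by linarith+
  have aR: "a ^ R = A"
    using A0 R1 a3 unfolding a_def by (simp add: powr_realpow[symmetric] powr_powr)
  have "3 / a \<le> 3 / (3 + 3 / c)"
    using root pos by (intro divide_left_mono) (auto intro: mult_pos_pos)
  also have "\<dots> = c / (c + 1)" using c0 by (simp add: field_simps)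
  also have "\<dots> < c" using c0 by (simp add: field_simps)
  finally have a_c: "3 / a < c" .
  define \<delta> where "\<delta> = min (1 / (2 * P)) (3 / a)"
  have "1 < A / 2 * \<delta> ^ R"
  proof (cases "1 / (2 * P) \<le> 3 / a")
    case True
    define T where "T = 2 ^ R * P ^ R"
    have "0 < T" and "2 * T < A" using P0 A_big unfolding T_def by simp_all
    have "\<delta> ^ R = 1 / T"
      unfolding \<delta>_def T_def using True by (simp add: power_divide power_mult_distrib)
    then have "A / 2 * \<delta> ^ R = A / (2 * T)" by simp
    then show ?thesis using \<open>0 < T\<close> \<open>2 * T < A\<close> by simp
  next
    case False
    then have "\<delta> ^ R = 3 ^ R / A" unfolding \<delta>_def using aR by (simp add: power_divide)
    moreover have "(3::real) \<le> 3 ^ R" using power_increasing[OF R1, of "3::real"] by simp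
    ultimately show ?thesis using A0 by (simp add: field_simps)
  qed
  moreover have "3 / a \<le> 1" using a3 by simp
  then have "0 < \<delta>" "\<delta> \<le> 1" "\<delta> < c"
    unfolding \<delta>_def using P0 a3 a_c by (auto simp: min_le_iff_disj min_less_iff_disj)
  moreover have "\<delta> * P \<le> 1 / 2" unfolding \<delta>_def using P0 by (simp add: min_def field_simps)
  ultimately show thesis using that by blast
qed

lemma small_values_descend:
  fixes u Q B :: "nat \<Rightarrow> real" and \<Lambda> :: "nat \<Rightarrow> int" and \<delta> P :: real and N n :: nat
  assumes Nn: "N \<le> n" and last: "\<bar>u n\<bar> \<le> 1 / 2"
    and ratio: "\<And>k. N < k \<Longrightarrow> k \<le> n \<Longrightarrow> \<bar>u (k - 1)\<bar> \<le> B k * \<bar>u k\<bar>"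
    and approx: "\<And>k. N < k \<Longrightarrow> k \<le> n \<Longrightarrow> \<bar>u k - of_int (\<Lambda> k)\<bar> \<le> \<delta> * Q k"
    and QB: "\<And>k. N < k \<Longrightarrow> k \<le> n \<Longrightarrow> Q k * B k \<le> P" and dP: "\<delta> * P \<le> 1 / 2"
    and Q_pos: "\<And>k. 0 < Q k" and B_pos: "\<And>k. 0 < B k"
  shows "\<bar>u N\<bar> \<le> 1 / 2"
proof -
  have "\<bar>u k\<bar> \<le> 1 / 2" if "N \<le> k" "k \<le> n" for k
    using that(2)
  proof (induction k rule: inc_induct)
    case base
    show ?case by (rule last)
  next
    case (step m)
    with that(1) have m: "N < Suc m" "Suc m \<le> n" by auto
    from ratio[OF m] have "\<bar>u m\<bar> \<le> B (Suc m) * \<bar>u (Suc m)\<bar>" by simp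
    then show ?case
      by (rule small_value_propagates[OF _ approx[OF m] step.IH QB[OF m] dP Q_pos B_pos])
  qed
  then show ?thesis using Nn by simp
qed

lemma no_small_approximation_at_base:
  fixes q L \<delta> Q :: real and \<Lambda> :: int
  assumes q1: "1 \<le> q" and approx: "\<bar>q * L - of_int \<Lambda>\<bar> \<le> \<delta> * Q"
    and small: "\<bar>q * L\<bar> \<le> 1 / 2" and Q0: "0 < Q"
    and d_height: "\<delta> < 1 / (2 * Q)" and d_value: "\<delta> < \<bar>L\<bar> / Q"
  shows False
proof (cases "\<Lambda> = 0")
  case True
  have "\<bar>L\<bar> \<le> q * \<bar>L\<bar>" using q1 by (simp add: mult_le_cancel_right1)
  also have "\<dots> \<le> \<delta> * Q" using approx True q1 by (simp add: abs_mult)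
  finally show False using d_value Q0 by (simp add: pos_less_divide_eq)
next
  case False
  then have "1 \<le> \<bar>real_of_int \<Lambda>\<bar>" by linarith
  then have "1 / 2 \<le> \<delta> * Q" using approx small by linarith
  then show False using d_height Q0 by (simp add: pos_less_divide_eq)
qed

lemma descent_contradiction:
  fixes xi :: "nat \<Rightarrow> real" and r :: "nat \<Rightarrow> nat" and l :: "nat \<Rightarrow> nat \<Rightarrow> int"
    and Q B :: "nat \<Rightarrow> real" and N n :: nat and P X \<delta> :: real
  defines "L \<equiv> linform l r xi"
  assumes xi0: "xi 0 = 1" and r_mono: "mono r" and Nn: "N \<le> n"
    and Q_pos: "\<And>k. 0 < Q k" and B_pos: "\<And>k. 0 < B k"
    and height: "\<And>k. N \<le> k \<Longrightarrow> k \<le> n \<Longrightarrow> (\<Sum>i=0..r k. \<bar>real_of_int (l i k)\<bar>) \<le> Q k"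
    and ratio: "\<And>k. N < k \<Longrightarrow> k \<le> n \<Longrightarrow> \<bar>L (k - 1)\<bar> \<le> B k * \<bar>L k\<bar>"
    and QB: "\<And>k. N < k \<Longrightarrow> k \<le> n \<Longrightarrow> Q k * B k \<le> P"
    and d0: "0 < \<delta>" and d1: "\<delta> \<le> 1" and dP: "\<delta> * P \<le> 1 / 2"
    and dirichlet: "1 < X * \<delta> ^ r n" and last_small: "X * \<bar>L n\<bar> \<le> 1 / 2"
    and d_height: "\<delta> < 1 / (2 * Q N)" and d_value: "\<delta> < \<bar>L N\<bar> / Q N"
  shows False
proof -
  obtain q :: int and p :: "nat \<Rightarrow> int" where q1: "1 \<le> q" and qX: "real_of_int q \<le> X"
    and qp: "\<And>i. i \<in> {1..r n} \<Longrightarrow> \<bar>of_int q * xi i - of_int (p i)\<bar> < \<delta>"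
    using dirichlet_simultaneous_real[of "{1..r n}" \<delta> X xi] d0 d1 dirichlet by auto
  text \<open>The integer point \<open>v\<close> approximates \<open>q \<cdot> \<xi>\<close>;
    its coordinate \<open>0\<close> is exact since \<open>\<xi>\<^sub>0 = 1\<close>.\<close>
  define v where "v = (\<lambda>i. if i = 0 then q else p i)"
  have v_approx: "\<bar>of_int q * xi i - of_int (v i)\<bar> \<le> \<delta>" if "i \<le> r n" for i
    using qp[of i] that d0 xi0 unfolding v_def by (cases "i = 0") auto
  have approx: "\<bar>of_int q * L k - of_int (\<Sum>i=0..r k. l i k * v i)\<bar> \<le> \<delta> * Q k"
    if "N \<le> k" "k \<le> n" for k
  proof -
    have "r k \<le> r n" using r_mono that(2) by (rule monoD)
    then have "\<bar>of_int q * L k - of_int (\<Sum>i=0..r k. l i k * v i)\<bar>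
        \<le> \<delta> * (\<Sum>i=0..r k. \<bar>real_of_int (l i k)\<bar>)"
      unfolding L_def linform_def by (intro approx_linear_combination v_approx) auto
    also have "\<dots> \<le> \<delta> * Q k" using height[OF that] d0 by simp
    finally show ?thesis .
  qed
  have ratio_q: "\<bar>of_int q * L (k - 1)\<bar> \<le> B k * \<bar>of_int q * L k\<bar>" if "N < k" "k \<le> n" for k
  proof -
    have "\<bar>of_int q * L (k - 1)\<bar> = of_int q * \<bar>L (k - 1)\<bar>" using q1 by (simp add: abs_mult)
    also have "\<dots> \<le> of_int q * (B k * \<bar>L k\<bar>)"
      using ratio[OF that] q1 by (intro mult_left_mono) simp_all
    also have "\<dots> = B k * \<bar>of_int q * L k\<bar>" using q1 by (simp add: abs_mult)
    finally show ?thesis .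
  qed
  have "\<bar>of_int q * L n\<bar> = of_int q * \<bar>L n\<bar>" using q1 by (simp add: abs_mult)
  also have "\<dots> \<le> X * \<bar>L n\<bar>" using qX by (rule mult_right_mono) simp
  finally have "\<bar>of_int q * L n\<bar> \<le> 1 / 2" using last_small by linarith
  then have small: "\<bar>of_int q * L N\<bar> \<le> 1 / 2"
    by (rule small_values_descend[where u = "\<lambda>k. of_int q * L k"
          and \<Lambda> = "\<lambda>k. \<Sum>i=0..r k. l i k * v i",
          OF Nn _ ratio_q approx[OF less_imp_le] QB dP Q_pos B_pos])
  show False
    using no_small_approximation_at_base[OF _ approx[OF order.refl Nn] small Q_pos d_height d_value] q1
    by simp
qed

lemma linear_form_bound_at:
  fixes xi :: "nat \<Rightarrow> real" and r :: "nat \<Rightarrow> nat" and l :: "nat \<Rightarrow> nat \<Rightarrow> int"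
    and Q A B :: "nat \<Rightarrow> real" and N n :: nat
  defines "L \<equiv> linform l r xi"
  assumes xi0: "xi 0 = 1" and r_mono: "mono r" and r_pos: "\<And>k. 0 < r k"
    and Q_pos: "\<And>k. 0 < Q k" and A_pos: "\<And>k. 0 < A k" and B_pos: "\<And>k. 0 < B k"
    and hyp: "\<And>k. N \<le> k \<Longrightarrow> Q k * B k \<le> Q (Suc k) * B (Suc k)
      \<and> (\<Sum>i=0..r k. \<bar>real_of_int (l i k)\<bar>) \<le> Q k
      \<and> 0 < \<bar>L k\<bar> \<and> \<bar>L k\<bar> \<le> 1 / A k \<and> \<bar>L (k - 1)\<bar> / \<bar>L k\<bar> \<le> B k"
    and Nn: "N \<le> n"
    and root: "3 + 3 / min (1 / (2 * Q N)) (\<bar>L N\<bar> / Q N) \<le> A n powr (1 / real (r n))"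
  shows "A n \<le> 2 ^ (r n + 1) * (B n * Q n) ^ (r n)"
proof (rule ccontr)
  define P where "P = Q n * B n"
  assume "\<not> ?thesis"
  then have A_big: "2 ^ (r n + 1) * P ^ r n < A n" unfolding P_def by (simp add: mult.commute)
  have "0 < P" unfolding P_def using Q_pos B_pos by simp
  moreover have "0 < min (1 / (2 * Q N)) (\<bar>L N\<bar> / Q N)" using Q_pos hyp[of N] by simp
  moreover have "1 \<le> r n" using r_pos[of n] by simp
  ultimately obtain \<delta> where d0: "0 < \<delta>" and d1: "\<delta> \<le> 1" and dP: "\<delta> * P \<le> 1 / 2"
    and dirichlet: "1 < A n / 2 * \<delta> ^ r n" and d_small: "\<delta> < min (1 / (2 * Q N)) (\<bar>L N\<bar> / Q N)"
    using choose_delta[OF _ _ _ A_pos A_big root] by blast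
  have QB: "Q k * B k \<le> P" if "N < k" "k \<le> n" for k
    using that(2) unfolding P_def
  proof (induction n rule: dec_induct)
    case (step m)
    then show ?case using hyp[of m] that(1) by fastforce
  qed simp
  have ratio: "\<bar>L (k - 1)\<bar> \<le> B k * \<bar>L k\<bar>" if "N < k" for k
  proof -
    have le: "\<bar>L (k - 1)\<bar> / \<bar>L k\<bar> \<le> B k" and pos: "0 < \<bar>L k\<bar>"
      using hyp[of k] that by auto
    from le show ?thesis unfolding pos_divide_le_eq[OF pos] .
  qed
  have "A n / 2 * \<bar>L n\<bar> \<le> A n / 2 * (1 / A n)"
    using hyp[OF Nn] A_pos[of n] by (intro mult_left_mono) auto
  then have last_small: "A n / 2 * \<bar>L n\<bar> \<le> 1 / 2" using A_pos[of n] by simp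
  show False
    using descent_contradiction[where xi = xi and r = r and l = l and Q = Q and B = B and N = N
        and n = n and P = P and X = "A n / 2" and \<delta> = \<delta>,
        OF xi0 r_mono Nn Q_pos B_pos _ _ _ d0 d1 dP dirichlet]
      hyp QB ratio last_small d_small unfolding L_def by auto
qed

theorem mainTheorem1:
  fixes xi :: "nat \<Rightarrow> real"
    and r :: "nat \<Rightarrow> nat"
    and Q A B :: "nat \<Rightarrow> real"
    and l :: "nat \<Rightarrow> nat \<Rightarrow> int"
  assumes xi0: "xi 0 = 1"
    and r_mono: "mono r"
    and r_pos: "\<And>n. r n > 0"
    and Q_pos: "\<And>n. Q n > 0"
    and A_pos: "\<And>n. A n > 0"
    and B_pos: "\<And>n. B n > 0"
    and A_lim: "filterlim (\<lambda>n. A n powr (1 / real (r n))) at_top sequentially"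
    and QB_mono: "eventually (\<lambda>n. Q n * B n \<le> Q (Suc n) * B (Suc n)) sequentially"
    and height: "eventually (\<lambda>n. (\<Sum>i=0..r n. \<bar>real_of_int (l i n)\<bar>) \<le> Q n) sequentially"
    and small: "eventually (\<lambda>n. 0 < \<bar>linform l r xi n\<bar> \<and> \<bar>linform l r xi n\<bar> \<le> 1 / A n) sequentially"
    and ratio: "eventually (\<lambda>n. \<bar>linform l r xi (n - 1)\<bar> / \<bar>linform l r xi n\<bar> \<le> B n) sequentially"
  shows "eventually (\<lambda>n. A n \<le> 2 ^ (r n + 1) * (B n * Q n) ^ (r n)) sequentially"
proof -
  define L where "L = linform l r xi"
  obtain N where hyp: "\<And>k. N \<le> k \<Longrightarrow> Q k * B k \<le> Q (Suc k) * B (Suc k)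
      \<and> (\<Sum>i=0..r k. \<bar>real_of_int (l i k)\<bar>) \<le> Q k
      \<and> 0 < \<bar>L k\<bar> \<and> \<bar>L k\<bar> \<le> 1 / A k \<and> \<bar>L (k - 1)\<bar> / \<bar>L k\<bar> \<le> B k"
    using eventually_conj[OF QB_mono eventually_conj[OF height eventually_conj[OF small ratio]]]
    unfolding eventually_sequentially L_def by blast
  have "eventually (\<lambda>n. 3 + 3 / min (1 / (2 * Q N)) (\<bar>L N\<bar> / Q N) \<le> A n powr (1 / real (r n)))
      sequentially"
    using A_lim unfolding filterlim_at_top by blast
  then show ?thesis
    using eventually_ge_at_top[of N]
  proof eventually_elim
    case (elim n)
    show ?case
      using linear_form_bound_at[where xi = xi and r = r and l = l and Q = Q and A = A and B = B
          and N = N and n = n, OF xi0 r_mono r_pos Q_pos A_pos B_pos] hyp elim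
      unfolding L_def by blast
  qed
qed

end
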